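(* Let $G$ be a finite group and $p$ a prime divisor of $|G|$. Suppose that $\mathrm{pr}^*_G(p,p')>\frac{p+q-1}{pq}$, where $q$ is the smallest prime in $\pi(G)\setminus\{p\}$. Then $G=O_p(G)\times O_{p'}(G)$.
   Context: For subsets $X,Y$ of a finite group $G$, $\Pr(X,Y)=|\{(x,y)\in X\times Y: xy=yx\}|/(|X||Y|)$. For sets of primes $\pi_1,\pi_2$, $\mathrm{pr}^*_G(\pi_1,\pi_2)$ denotes the maximum real number $\epsilon$ such that for every pair of distinct primes $r\in\pi_1$, $s\in\pi_2$ there exist a Sylow $r$-subgroup $R$ and a Sylow $s$-subgroup $S$ of $G$ with $\Pr(R,S)\ge\epsilon$ (the Sylow subgroup for a prime not dividing $|G|$ is trivial); $\mathrm{pr}^*_G(p,\pi_2)=\mathrm{pr}^*_G(\{p\},\pi_2)$. $p'$ denotes the set of primes different from $p$. $\pi(G)$ is the set of prime divisors of $|G|$. *)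

theory Defs
  imports Complex_Main "HOL-Algebra.Algebra"
begin

definition comm_prob :: "('a, 'b) monoid_scheme \<Rightarrow> 'a set \<Rightarrow> 'a set \<Rightarrow> real" where
  "comm_prob G A B =
     real (card {(x, y) \<in> Sigma A (\<lambda>_. B). monoid.mult G x y = monoid.mult G y x}) / (real (card A) * real (card B))"

text \<open>Sylow r-subgroup of a finite group: subgroup of order the full r-part of |G|
  (the trivial subgroup if r does not divide |G|).\<close>
definition sylow_subgroup :: "('a, 'b) monoid_scheme \<Rightarrow> nat \<Rightarrow> 'a set \<Rightarrow> bool" where
  "sylow_subgroup G r P \<longleftrightarrow> subgroup P G \<and> card P = r ^ multiplicity r (order G)"

definition pr_star :: "('a, 'b) monoid_scheme \<Rightarrow> nat set \<Rightarrow> nat set \<Rightarrow> real" where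
  "pr_star G \<pi>1 \<pi>2 = (GREATEST \<epsilon>. \<forall>r s. r \<in> \<pi>1 \<and> s \<in> \<pi>2 \<and> Factorial_Ring.prime r \<and> Factorial_Ring.prime s \<and> r \<noteq> s \<longrightarrow>
       (\<exists>R S. sylow_subgroup G r R \<and> sylow_subgroup G s S \<and> comm_prob G R S \<ge> \<epsilon>))"

definition primes_except :: "nat \<Rightarrow> nat set" where
  "primes_except p = {r. Factorial_Ring.prime r \<and> r \<noteq> p}"

definition prime_divs :: "('a, 'b) monoid_scheme \<Rightarrow> nat set" where
  "prime_divs G = {r. Factorial_Ring.prime r \<and> r dvd order G}"

definition pi_subgroup :: "('a, 'b) monoid_scheme \<Rightarrow> nat set \<Rightarrow> 'a set \<Rightarrow> bool" where
  "pi_subgroup G \<pi> H \<longleftrightarrow> subgroup H G \<and> (\<forall>r. Factorial_Ring.prime r \<and> r dvd card H \<longrightarrow> r \<in> \<pi>)"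

definition O_pi :: "('a, 'b) monoid_scheme \<Rightarrow> nat set \<Rightarrow> 'a set" where
  "O_pi G \<pi> = generate G (\<Union>{N. normal N G \<and> pi_subgroup G \<pi> N})"

end

theory Submission
  imports Defs
begin

(* Fix a Sylow p-subgroup R of G and let C be its centralizer.  Counting commuting pairs shows that
   Pr(R', S) \<le> (p + s - 1)/(p s) \<le> (p + q - 1)/(p q) unless the Sylow subgroups R' and S commute
   elementwise, so the hypothesis gives, for every prime s \<noteq> p dividing |G|, a Sylow s-subgroup
   centralizing some Sylow p-subgroup.  Conjugating, every such s-part divides |C|, hence R C = G and R
   is normal.  Then Z = R \<inter> C is a central subgroup of C of order coprime to its index, so the
   kernel K of the transfer C \<rightarrow> Z is a normal complement of Z in C; since R centralizes C, K is
   normal in G and G = R \<times> K, with R = O_p(G) and K = O_p'(G). *)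

definition centralizer :: "('a, 'b) monoid_scheme \<Rightarrow> 'a set \<Rightarrow> 'a set" where
  "centralizer G S = {x \<in> carrier G. \<forall>y\<in>S. monoid.mult G x y = monoid.mult G y x}"

section \<open>Subgroups, centralizers and products of subgroups\<close>

context group
begin

lemma inv_commute:
  assumes x: "x \<in> carrier G" and y: "y \<in> carrier G" and xy: "x \<otimes> y = y \<otimes> x"
  shows "inv x \<otimes> y = y \<otimes> inv x"
proof -
  have "inv x \<otimes> y = inv x \<otimes> (y \<otimes> x) \<otimes> inv x" using x y by (simp add: m_assoc)
  also have "\<dots> = y \<otimes> inv x" using x y by (simp add: xy[symmetric] m_assoc[symmetric])
  finally show ?thesis .
qed

lemma subgroup_centralizer:
  assumes "S \<subseteq> carrier G"
  shows "subgroup (centralizer G S) G"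
proof (rule subgroupI)
  show "centralizer G S \<subseteq> carrier G" "centralizer G S \<noteq> {}"
    using assms by (auto simp: centralizer_def intro!: exI[of _ \<one>])
  show "inv x \<in> centralizer G S" if "x \<in> centralizer G S" for x
    using that assms inv_commute by (auto simp: centralizer_def)
  show "x \<otimes> y \<in> centralizer G S" if "x \<in> centralizer G S" "y \<in> centralizer G S" for x y
    using that assms by (auto simp: centralizer_def m_assoc subset_iff) (metis m_assoc)
qed

lemma card_subgroup_dvd:
  assumes H: "subgroup H G" and K: "subgroup K G" and HK: "H \<subseteq> K"
  shows "card H dvd card K"
proof -
  interpret K: group "G\<lparr>carrier := K\<rparr>" using subgroup_imp_group[OF K] .
  have "card (rcosets\<^bsub>G\<lparr>carrier := K\<rparr>\<^esub> H) * card H = card K"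
    using K.lagrange[OF subgroup_incl[OF H K HK]] by (simp add: order_def)
  thus ?thesis by (metis dvd_triv_right)
qed

lemma card_proper_subgroup_prime_power:
  assumes H: "subgroup H G" and K: "subgroup K G" and HK: "H \<subset> K"
    and s: "Factorial_Ring.prime (s::nat)" and cK: "card K = s ^ b"
  shows "s * card H \<le> card K"
proof -
  have "card H dvd s ^ b" using card_subgroup_dvd[OF H K] HK cK by auto
  then obtain i where i: "i \<le> b" "card H = s ^ i" using divides_primepow_nat[OF s] by blast
  have "finite K" using cK prime_gt_1_nat[OF s] card_ge_0_finite by force
  hence "card H < card K" using psubset_card_mono HK by blast
  hence "i < b" using i cK by (cases "i = b") auto
  hence "s ^ Suc i \<le> s ^ b" using prime_gt_1_nat[OF s] by (intro power_increasing) auto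
  thus ?thesis using i cK by simp
qed

lemma subgroup_eq_carrier_if_prime_power_parts_dvd:
  assumes fin: "finite (carrier G)" and H: "subgroup H G"
    and parts: "\<And>s. Factorial_Ring.prime s \<Longrightarrow> s dvd order G \<Longrightarrow> s ^ multiplicity s (order G) dvd card H"
  shows "H = carrier G"
proof -
  have Hc: "H \<subseteq> carrier G" using subgroup.subset[OF H] .
  have H0: "card H \<noteq> 0" using subgroup.one_closed[OF H] finite_subset[OF Hc fin] by auto
  have "order G dvd card H"
  proof (rule multiplicity_le_imp_dvd)
    show "order G \<noteq> 0" using fin order_gt_0_iff_finite by auto
    fix s :: nat assume s: "Factorial_Ring.prime s"
    show "multiplicity s (order G) \<le> multiplicity s (card H)"
    proof (cases "s dvd order G")
      case True
      thus ?thesis using parts[OF s True] H0 s by (intro multiplicity_geI) auto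
    qed (simp add: not_dvd_imp_multiplicity_0)
  qed
  hence "card (carrier G) \<le> card H" using H0 by (simp add: order_def dvd_imp_le)
  thus ?thesis using card_seteq[OF fin Hc] by blast
qed

lemma subgroup_conj_image:
  assumes H: "subgroup H G" and g: "g \<in> carrier G"
  shows "subgroup ((\<lambda>y. inv g \<otimes> y \<otimes> g) ` H) G" "card ((\<lambda>y. inv g \<otimes> y \<otimes> g) ` H) = card H"
proof -
  have "(\<lambda>y. inv g \<otimes> y \<otimes> g) ` H = inv g <# H #> g"
    unfolding l_coset_def r_coset_def by auto
  thus "subgroup ((\<lambda>y. inv g \<otimes> y \<otimes> g) ` H) G"
    using subgroup_conjugation_is_surj1[OF g H] by simp
  have "inj_on (\<lambda>y. inv g \<otimes> y \<otimes> g) H"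
    using g subgroup.subset[OF H] by (auto intro!: inj_onI simp: subset_iff)
  thus "card ((\<lambda>y. inv g \<otimes> y \<otimes> g) ` H) = card H" by (rule card_image)
qed

lemma set_mult_fibre_eq_image:
  assumes H: "subgroup H G" and K: "subgroup K G" and h0: "h0 \<in> H" and k0: "k0 \<in> K"
  shows "{(h, k) \<in> H \<times> K. h \<otimes> k = h0 \<otimes> k0} = (\<lambda>z. (h0 \<otimes> z, inv z \<otimes> k0)) ` (H \<inter> K)"
proof (intro equalityI subsetI)
  have Hc: "H \<subseteq> carrier G" and Kc: "K \<subseteq> carrier G" using H K subgroup.subset by auto
  fix hk assume "hk \<in> {(h, k) \<in> H \<times> K. h \<otimes> k = h0 \<otimes> k0}"
  then obtain h k where hk: "hk = (h, k)" "h \<in> H" "k \<in> K" "h \<otimes> k = h0 \<otimes> k0" by auto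
  have c: "h \<in> carrier G" "k \<in> carrier G" "h0 \<in> carrier G" "k0 \<in> carrier G"
    using hk h0 k0 Hc Kc by auto
  define z where "z = inv h0 \<otimes> h"
  have "z = k0 \<otimes> inv k"
    using hk(4) c unfolding z_def by (metis inv_solve_left' inv_solve_right m_assoc m_closed inv_closed)
  moreover have "inv h0 \<otimes> h \<in> H" "k0 \<otimes> inv k \<in> K"
    using h0 hk k0 H K by (simp_all add: subgroup.m_closed subgroup.m_inv_closed)
  ultimately have "z \<in> H \<inter> K" unfolding z_def by simp
  moreover have "h = h0 \<otimes> z" using c unfolding z_def by (simp add: m_assoc[symmetric])
  moreover have "k = inv z \<otimes> k0"
    using c unfolding \<open>z = k0 \<otimes> inv k\<close> by (simp add: inv_mult_group m_assoc)
  ultimately show "hk \<in> (\<lambda>z. (h0 \<otimes> z, inv z \<otimes> k0)) ` (H \<inter> K)" using hk(1) by blast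
next
  fix hk assume "hk \<in> (\<lambda>z. (h0 \<otimes> z, inv z \<otimes> k0)) ` (H \<inter> K)"
  then obtain z where z: "z \<in> H" "z \<in> K" "hk = (h0 \<otimes> z, inv z \<otimes> k0)" by blast
  have "z \<in> carrier G" "h0 \<in> carrier G" "k0 \<in> carrier G"
    using z h0 k0 subgroup.mem_carrier[OF H] subgroup.mem_carrier[OF K] by auto
  thus "hk \<in> {(h, k) \<in> H \<times> K. h \<otimes> k = h0 \<otimes> k0}"
    using z h0 k0 H K
    by (simp add: subgroup.m_closed subgroup.m_inv_closed m_assoc) (simp add: m_assoc[symmetric])
qed

lemma card_set_mult_mult_card_Int:
  assumes fin: "finite (carrier G)" and H: "subgroup H G" and K: "subgroup K G"
  shows "card (H <#> K) * card (H \<inter> K) = card H * card K"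
proof -
  let ?mult = "\<lambda>(h, k). h \<otimes> k"
  have Hc: "H \<subseteq> carrier G" and Kc: "K \<subseteq> carrier G" using H K subgroup.subset by auto
  have fibre: "card {hk \<in> H \<times> K. ?mult hk = y} = card (H \<inter> K)" if "y \<in> H <#> K" for y
  proof -
    obtain h0 k0 where h0: "h0 \<in> H" and k0: "k0 \<in> K" and y: "y = h0 \<otimes> k0"
      using \<open>y \<in> H <#> K\<close> unfolding set_mult_def by blast
    have "{hk \<in> H \<times> K. ?mult hk = y} = (\<lambda>z. (h0 \<otimes> z, inv z \<otimes> k0)) ` (H \<inter> K)"
      unfolding y set_mult_fibre_eq_image[OF H K h0 k0, symmetric] by auto
    moreover have "inj_on (\<lambda>z. (h0 \<otimes> z, inv z \<otimes> k0)) (H \<inter> K)"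
      using h0 Hc by (auto intro!: inj_onI simp: subset_iff)
    ultimately show ?thesis by (simp add: card_image)
  qed
  have "?mult ` (H \<times> K) \<subseteq> H <#> K" unfolding set_mult_def by auto
  moreover have "finite (H <#> K)" "finite H" "finite K"
    using finite_subset[OF setmult_subset_G[OF Hc Kc] fin] finite_subset[OF Hc fin]
      finite_subset[OF Kc fin] by auto
  ultimately have "card (H \<times> K) = (\<Sum>y\<in>H <#> K. card {hk \<in> H \<times> K. ?mult hk = y})"
    using sum.group[of "H \<times> K" "H <#> K" ?mult "\<lambda>_. 1::nat"] by simp
  also have "\<dots> = card (H <#> K) * card (H \<inter> K)" using fibre by simp
  finally show ?thesis by (simp add: card_cartesian_product)
qed

lemma subgroup_set_mult_centralizing:
  assumes H: "subgroup H G" and K: "subgroup K G" and KH: "K \<subseteq> centralizer G H"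
  shows "subgroup (H <#> K) G"
proof (rule subgroupI)
  have Hc: "H \<subseteq> carrier G" and Kc: "K \<subseteq> carrier G" using H K subgroup.subset by auto
  have comm: "k \<otimes> h = h \<otimes> k" if "k \<in> K" "h \<in> H" for k h
    using that KH by (auto simp: centralizer_def)
  show "H <#> K \<subseteq> carrier G" using setmult_subset_G[OF Hc Kc] .
  show "H <#> K \<noteq> {}" using subgroup.one_closed[OF H] subgroup.one_closed[OF K]
    unfolding set_mult_def by blast
  show "inv x \<in> H <#> K" if x: "x \<in> H <#> K" for x
  proof -
    obtain h k where hk: "h \<in> H" "k \<in> K" "x = h \<otimes> k" using x unfolding set_mult_def by blast
    have "h \<in> carrier G" "k \<in> carrier G" using hk Hc Kc by auto
    hence "inv x = inv h \<otimes> inv k"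
      using hk comm[OF subgroup.m_inv_closed[OF K hk(2)] subgroup.m_inv_closed[OF H hk(1)]]
      by (auto simp: inv_mult_group)
    thus ?thesis using subgroup.m_inv_closed[OF H hk(1)] subgroup.m_inv_closed[OF K hk(2)]
      unfolding set_mult_def by blast
  qed
  show "x \<otimes> y \<in> H <#> K" if x: "x \<in> H <#> K" and y: "y \<in> H <#> K" for x y
  proof -
    obtain h k where hk: "h \<in> H" "k \<in> K" "x = h \<otimes> k" using x unfolding set_mult_def by blast
    obtain h' k' where hk': "h' \<in> H" "k' \<in> K" "y = h' \<otimes> k'" using y unfolding set_mult_def by blast
    have c: "h \<in> carrier G" "k \<in> carrier G" "h' \<in> carrier G" "k' \<in> carrier G"
      using hk hk' Hc Kc by auto
    have "x \<otimes> y = h \<otimes> (k \<otimes> h') \<otimes> k'" using hk hk' c by (simp add: m_assoc)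
    also have "\<dots> = (h \<otimes> h') \<otimes> (k \<otimes> k')" using comm[OF hk(2) hk'(1)] c by (simp add: m_assoc)
    finally show ?thesis using subgroup.m_closed[OF H hk(1) hk'(1)] subgroup.m_closed[OF K hk(2) hk'(2)]
      unfolding set_mult_def by blast
  qed
qed

lemma normal_if_normalized_by_factors:
  assumes N: "subgroup N G" and AB: "A <#> B = carrier G"
    and Ac: "A \<subseteq> carrier G" and Bc: "B \<subseteq> carrier G"
    and A: "\<And>a x. a \<in> A \<Longrightarrow> x \<in> N \<Longrightarrow> a \<otimes> x \<otimes> inv a \<in> N"
    and B: "\<And>b x. b \<in> B \<Longrightarrow> x \<in> N \<Longrightarrow> b \<otimes> x \<otimes> inv b \<in> N"
  shows "N \<lhd> G"
  unfolding normal_inv_iff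
proof (intro conjI N ballI)
  fix g x assume g: "g \<in> carrier G" and x: "x \<in> N"
  obtain a b where ab: "a \<in> A" "b \<in> B" "g = a \<otimes> b" using g AB unfolding set_mult_def by blast
  have c: "a \<in> carrier G" "b \<in> carrier G" "x \<in> carrier G"
    using ab Ac Bc x subgroup.mem_carrier[OF N] by auto
  have "g \<otimes> x \<otimes> inv g = a \<otimes> (b \<otimes> x \<otimes> inv b) \<otimes> inv a"
    using ab(3) c by (simp add: inv_mult_group m_assoc)
  thus "g \<otimes> x \<otimes> inv g \<in> N" using A[OF ab(1) B[OF ab(2) x]] by simp
qed

lemma normal_if_set_mult_centralizer_eq_carrier:
  assumes R: "subgroup R G" and RC: "R <#> centralizer G R = carrier G"
  shows "R \<lhd> G"
proof (rule normal_if_normalized_by_factors[OF R RC subgroup.subset[OF R]])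
  have Rc: "R \<subseteq> carrier G" using subgroup.subset[OF R] .
  show "centralizer G R \<subseteq> carrier G" by (auto simp: centralizer_def)
  show "r \<otimes> x \<otimes> inv r \<in> R" if "r \<in> R" "x \<in> R" for r x
    using that R by (simp add: subgroup.m_closed subgroup.m_inv_closed)
  show "c \<otimes> x \<otimes> inv c \<in> R" if "c \<in> centralizer G R" "x \<in> R" for c x
    using that Rc by (auto simp: centralizer_def m_assoc subset_iff)
qed

section \<open>Normal Hall subgroups and \<open>O_pi\<close>\<close>

lemma ord_dvd_card_subgroup:
  assumes H: "subgroup H G" and x: "x \<in> H"
  shows "ord x dvd card H"
proof -
  interpret H: group "G\<lparr>carrier := H\<rparr>" using subgroup_imp_group[OF H] .
  have "x [^] card H = \<one>"
    using H.pow_order_eq_1[of x] x by (simp add: order_def nat_pow_consistent[symmetric])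
  thus ?thesis using pow_eq_id subgroup.mem_carrier[OF H x] by blast
qed

lemma mem_normal_if_coprime_ord_index:
  assumes N: "N \<lhd> G" and x: "x \<in> carrier G" and cop: "coprime (ord x) (card (rcosets N))"
  shows "x \<in> N"
proof -
  interpret N: normal N G using N .
  interpret Q: group "G Mod N" using N.factorgroup_is_group .
  have hom: "(\<lambda>a. N #> a) \<in> hom G (G Mod N)" using N.r_coset_hom_Mod .
  have xN: "N #> x \<in> carrier (G Mod N)" using hom x by (auto simp: hom_def)
  have "(N #> x) [^]\<^bsub>G Mod N\<^esub> ord x = N #> (x [^] ord x)"
    using hom_nat_pow[OF hom x is_group Q.is_group] by simp
  also have "\<dots> = \<one>\<^bsub>G Mod N\<^esub>" using x N.subgroup_axioms by (simp add: coset_join2)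
  finally have "Q.ord (N #> x) dvd ord x" using Q.pow_eq_id xN by blast
  moreover have "Q.ord (N #> x) dvd card (rcosets N)"
    using Q.ord_dvd_group_order[OF xN] by (simp add: order_def FactGroup_def)
  ultimately have "Q.ord (N #> x) = 1" using cop by (meson coprime_common_divisor_nat)
  hence "N #> x = N" using Q.ord_eq_1 xN by simp
  thus ?thesis using coset_join1 x N.subgroup_axioms by blast
qed

lemma subgroup_subset_normal_if_coprime:
  assumes N: "N \<lhd> G" and M: "subgroup M G" and cop: "coprime (card M) (card (rcosets N))"
  shows "M \<subseteq> N"
proof
  fix x assume "x \<in> M"
  hence "coprime (ord x) (card (rcosets N))"
    using ord_dvd_card_subgroup[OF M] cop coprime_imp_coprime dvd_trans by blast
  thus "x \<in> N" using mem_normal_if_coprime_ord_index[OF N] subgroup.mem_carrier[OF M \<open>x \<in> M\<close>] by blast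
qed

end

lemma coprime_if_no_common_prime_factor:
  assumes "\<And>r. Factorial_Ring.prime (r::nat) \<Longrightarrow> r dvd a \<Longrightarrow> r dvd b \<Longrightarrow> False"
  shows "coprime a b"
proof (rule ccontr)
  assume "\<not> coprime a b"
  then obtain r where "Factorial_Ring.prime r" "r dvd gcd a b"
    using prime_factor_nat by (metis coprime_iff_gcd_eq_1)
  thus False using assms by auto
qed

lemma (in group) O_pi_eq_if_normal_Hall:
  assumes N: "N \<lhd> G" and piN: "pi_subgroup G \<pi> N"
    and index: "\<And>r. Factorial_Ring.prime r \<Longrightarrow> r dvd card (rcosets N) \<Longrightarrow> r \<notin> \<pi>"
  shows "O_pi G \<pi> = N"
proof -
  have "M \<subseteq> N" if "M \<lhd> G" "pi_subgroup G \<pi> M" for M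
    using that index unfolding pi_subgroup_def
    by (intro subgroup_subset_normal_if_coprime[OF N] coprime_if_no_common_prime_factor) auto
  hence "\<Union>{M. M \<lhd> G \<and> pi_subgroup G \<pi> M} = N" using N piN by blast
  moreover have "generate G N = N"
    by (rule equalityI[OF generate_subgroup_incl[OF subset_refl normal_imp_subgroup[OF N]]])
      (auto intro: generate.incl)
  ultimately show ?thesis unfolding O_pi_def by simp
qed

section \<open>Conjugating a \<open>p\<close>-subgroup into a subgroup of \<open>p\<close>-prime index\<close>

lemma (in group_action) fixed_point_if_prime_power_order:
  assumes finE: "finite E" and p: "Factorial_Ring.prime p" and ord: "order G = p ^ a"
    and ndvd: "\<not> p dvd card E"
  shows "\<exists>x\<in>E. \<forall>g\<in>carrier G. \<phi> g x = x"
proof -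
  have orbit_card: "card Ob = 1 \<or> p dvd card Ob" if Ob: "Ob \<in> orbits G E \<phi>" for Ob
  proof -
    obtain x where "x \<in> E" "Ob = orbit G \<phi> x" using Ob unfolding orbits_def by blast
    hence "card Ob dvd p ^ a" using orbit_stabilizer_theorem ord by (metis dvd_triv_left)
    then obtain i where "card Ob = p ^ i" using divides_primepow_nat[OF p] by blast
    thus ?thesis by (cases i) auto
  qed
  have "\<exists>Ob\<in>orbits G E \<phi>. card Ob = 1"
  proof (rule ccontr)
    assume "\<not> ?thesis"
    hence "\<forall>Ob\<in>orbits G E \<phi>. p dvd card Ob" using orbit_card by blast
    moreover have "card E = (\<Sum>Ob\<in>orbits G E \<phi>. card Ob)"
      using disjoint_sum[OF finE, of "\<lambda>_. 1::nat"] by simp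
    ultimately show False using ndvd by (simp add: dvd_sum)
  qed
  then obtain x where x: "x \<in> E" and card1: "card (orbit G \<phi> x) = 1"
    unfolding orbits_def by blast
  have "\<phi> g x = x" if "g \<in> carrier G" for g
  proof -
    have "\<phi> g x \<in> orbit G \<phi> x" using that unfolding orbit_def by auto
    thus ?thesis using card1 orbit_refl[OF x] by (metis card_1_singletonE singletonD)
  qed
  thus ?thesis using x by blast
qed

context group
begin

lemma rcosets_mult_closed:
  assumes "subgroup H G" "M \<in> rcosets H" "g \<in> carrier G"
  shows "M #> g \<in> rcosets H"
proof -
  obtain a where "a \<in> carrier G" "M = H #> a" using assms(2) by (auto simp: RCOSETS_def)
  thus ?thesis using assms(3) subgroup.subset[OF assms(1)] rcosetsI by (simp add: coset_mult_assoc)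
qed

lemma bij_betw_rcosets_mult:
  assumes H: "subgroup H G" and g: "g \<in> carrier G"
  shows "bij_betw (\<lambda>M. M #> g) (rcosets H) (rcosets H)"
proof (rule bij_betw_byWitness[where f' = "\<lambda>M. M #> inv g"])
  have sub: "\<And>M. M \<in> rcosets H \<Longrightarrow> M \<subseteq> carrier G" using rcosets_part_G[OF H] by blast
  show "\<forall>M\<in>rcosets H. M #> g #> inv g = M" using sub g by (simp add: coset_mult_assoc)
  show "\<forall>M\<in>rcosets H. M #> inv g #> g = M" using sub g by (simp add: coset_mult_assoc)
  show "(\<lambda>M. M #> g) ` (rcosets H) \<subseteq> rcosets H" using rcosets_mult_closed[OF H _ g] by blast
  show "(\<lambda>M. M #> inv g) ` (rcosets H) \<subseteq> rcosets H" using rcosets_mult_closed[OF H] g by blast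
qed

lemma rcosets_action:
  assumes Q: "subgroup Q G" and P: "subgroup P G"
  shows "group_action (G\<lparr>carrier := P\<rparr>) (rcosets Q) (\<lambda>h. \<lambda>M \<in> rcosets Q. M #> inv h)"
proof -
  let ?E = "rcosets Q"
  let ?\<phi> = "\<lambda>h. \<lambda>M \<in> rcosets Q. M #> inv h"
  have Pc: "P \<subseteq> carrier G" using P subgroup.subset by auto
  have bij: "?\<phi> h \<in> Bij ?E" if "h \<in> P" for h
  proof -
    have "bij_betw (\<lambda>M. M #> inv h) ?E ?E" using bij_betw_rcosets_mult[OF Q] that Pc by auto
    hence "bij_betw (?\<phi> h) ?E ?E" by (rule bij_betw_cong[THEN iffD1, rotated]) simp
    thus ?thesis unfolding Bij_def by simp
  qed
  have "?\<phi> \<in> hom (G\<lparr>carrier := P\<rparr>) (BijGroup ?E)"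
  proof (rule homI)
    show "?\<phi> h \<in> carrier (BijGroup ?E)" if "h \<in> carrier (G\<lparr>carrier := P\<rparr>)" for h
      using bij that by (simp add: BijGroup_def)
    fix x y assume "x \<in> carrier (G\<lparr>carrier := P\<rparr>)" "y \<in> carrier (G\<lparr>carrier := P\<rparr>)"
    hence xy: "x \<in> P" "y \<in> P" and c: "x \<in> carrier G" "y \<in> carrier G" using Pc by auto
    have "?\<phi> x \<otimes>\<^bsub>BijGroup ?E\<^esub> ?\<phi> y = compose ?E (?\<phi> x) (?\<phi> y)"
      using bij xy by (simp add: BijGroup_def)
    also have "\<dots> = ?\<phi> (x \<otimes> y)"
    proof
      have "\<And>M. M \<in> ?E \<Longrightarrow> M \<subseteq> carrier G" using rcosets_part_G[OF Q] by blast
      thus "compose ?E (?\<phi> x) (?\<phi> y) M = ?\<phi> (x \<otimes> y) M" for M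
        using c rcosets_mult_closed[OF Q] by (simp add: compose_def inv_mult_group coset_mult_assoc)
    qed
    finally show "?\<phi> (x \<otimes>\<^bsub>G\<lparr>carrier := P\<rparr>\<^esub> y) = ?\<phi> x \<otimes>\<^bsub>BijGroup ?E\<^esub> ?\<phi> y" by simp
  qed
  thus ?thesis
    unfolding group_action_def group_hom_def group_hom_axioms_def
    using subgroup_imp_group[OF P] group_BijGroup by blast
qed

lemma prime_power_subgroup_conjugate_into:
  assumes fin: "finite (carrier G)" and p: "Factorial_Ring.prime p"
    and Q: "subgroup Q G" and P: "subgroup P G" and cP: "card P = p ^ a"
    and ndvd: "\<not> p dvd card (rcosets Q)"
  shows "\<exists>g\<in>carrier G. \<forall>h\<in>P. g \<otimes> h \<otimes> inv g \<in> Q"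
proof -
  interpret A: group_action "G\<lparr>carrier := P\<rparr>" "rcosets Q" "\<lambda>h. \<lambda>M \<in> rcosets Q. M #> inv h"
    using rcosets_action[OF Q P] .
  have Qc: "Q \<subseteq> carrier G" and Pc: "P \<subseteq> carrier G" using Q P subgroup.subset by auto
  have "finite (rcosets Q)" using rcosets_subset_PowG[OF Q] fin finite_subset by blast
  then obtain M where M: "M \<in> rcosets Q" and fixed: "\<And>h. h \<in> P \<Longrightarrow> M #> inv h = M"
    using A.fixed_point_if_prime_power_order[OF _ p _ ndvd] cP by (force simp: order_def)
  obtain g where g: "g \<in> carrier G" and Mg: "M = Q #> g" using M by (auto simp: RCOSETS_def)
  have "g \<otimes> h \<otimes> inv g \<in> Q" if h: "h \<in> P" for h
  proof -
    have hc: "h \<in> carrier G" using h Pc by blast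
    have "Q #> g #> inv (inv h) = Q #> g" using fixed Mg subgroup.m_inv_closed[OF P h] by metis
    hence "Q #> (g \<otimes> h) = Q #> g" using hc g Qc coset_mult_assoc by simp
    hence "Q #> (g \<otimes> h \<otimes> inv g) = Q"
      using coset_mult_inv2[of Q "g \<otimes> h" g] hc g Qc by simp
    thus ?thesis using coset_join1[OF _ _ Q] hc g by simp
  qed
  thus ?thesis using g by blast
qed

lemma not_dvd_card_rcosets_sylow:
  assumes fin: "finite (carrier G)" and p: "Factorial_Ring.prime p"
    and P: "subgroup P G" and cP: "card P = p ^ multiplicity p (order G)"
  shows "\<not> p dvd card (rcosets P)"
proof
  assume "p dvd card (rcosets P)"
  then obtain c where "card (rcosets P) = p * c" by blast
  hence "order G = p ^ Suc (multiplicity p (order G)) * c"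
    using lagrange[OF P] cP by (simp add: ac_simps)
  hence "p ^ Suc (multiplicity p (order G)) dvd order G" by (metis dvd_triv_left)
  hence "Suc (multiplicity p (order G)) \<le> multiplicity p (order G)"
    using fin p by (intro multiplicity_geI) (auto simp: order_gt_0_iff_finite[symmetric])
  thus False by simp
qed

lemma card_dvd_card_centralizer_sylow:
  assumes fin: "finite (carrier G)" and p: "Factorial_Ring.prime p"
    and R: "subgroup R G" "card R = p ^ multiplicity p (order G)"
    and R': "subgroup R' G" "card R' = p ^ multiplicity p (order G)"
    and S: "subgroup S G" "S \<subseteq> centralizer G R'"
  shows "card S dvd card (centralizer G R)"
proof -
  obtain g where g: "g \<in> carrier G" and gR: "\<And>h. h \<in> R \<Longrightarrow> g \<otimes> h \<otimes> inv g \<in> R'"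
    using prime_power_subgroup_conjugate_into[OF fin p R'(1) R(1) R(2)]
      not_dvd_card_rcosets_sylow[OF fin p R'] by blast
  define S' where "S' = (\<lambda>y. inv g \<otimes> y \<otimes> g) ` S"
  have "S' \<subseteq> centralizer G R"
  proof
    fix x assume "x \<in> S'"
    then obtain y where y: "y \<in> S" "x = inv g \<otimes> y \<otimes> g" unfolding S'_def by blast
    have yc: "y \<in> carrier G" using y subgroup.subset[OF S(1)] by blast
    have "x \<otimes> h = h \<otimes> x" if h: "h \<in> R" for h
    proof -
      have hc: "h \<in> carrier G" using h subgroup.subset[OF R(1)] by blast
      have comm: "y \<otimes> (g \<otimes> h \<otimes> inv g) = (g \<otimes> h \<otimes> inv g) \<otimes> y"
        using y S(2) gR[OF h] by (auto simp: centralizer_def)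
      have "x \<otimes> h = inv g \<otimes> (y \<otimes> (g \<otimes> h \<otimes> inv g)) \<otimes> g"
        using y(2) g hc yc by (simp add: m_assoc)
      also have "\<dots> = inv g \<otimes> ((g \<otimes> h \<otimes> inv g) \<otimes> y) \<otimes> g" using comm by simp
      also have "\<dots> = h \<otimes> x"
        using y(2) g hc yc by (simp add: m_assoc) (simp add: m_assoc[symmetric])
      finally show ?thesis .
    qed
    thus "x \<in> centralizer G R" using y g yc by (auto simp: centralizer_def)
  qed
  hence "card S' dvd card (centralizer G R)"
    using card_subgroup_dvd subgroup_conj_image(1)[OF S(1) g]
      subgroup_centralizer[OF subgroup.subset[OF R(1)]] unfolding S'_def by blast
  thus ?thesis using subgroup_conj_image(2)[OF S(1) g] unfolding S'_def by simp
qed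

end

section \<open>The transfer into a central subgroup\<close>

definition coset_rep :: "'a set \<Rightarrow> 'a" where
  "coset_rep M = (SOME x. x \<in> M)"

definition transfer :: "('a, 'b) monoid_scheme \<Rightarrow> 'a set \<Rightarrow> 'a \<Rightarrow> 'a" where
  "transfer G Z g = finprod (G\<lparr>carrier := Z\<rparr>)
     (\<lambda>M. coset_rep M \<otimes>\<^bsub>G\<^esub> g \<otimes>\<^bsub>G\<^esub> inv\<^bsub>G\<^esub> coset_rep (M #>\<^bsub>G\<^esub> g)) (rcosets\<^bsub>G\<^esub> Z)"

context group
begin

context
  fixes Z
  assumes Z: "subgroup Z G" and Z_central: "Z \<subseteq> centralizer G (carrier G)"
begin

interpretation Z: comm_group "G\<lparr>carrier := Z\<rparr>"
proof -
  interpret Z: group "G\<lparr>carrier := Z\<rparr>" using subgroup_imp_group[OF Z] .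
  show "comm_group (G\<lparr>carrier := Z\<rparr>)"
    by (rule Z.group_comm_groupI) (use Z_central in \<open>auto simp: centralizer_def\<close>)
qed

lemma coset_rep_mem:
  assumes "M \<in> rcosets Z"
  shows "coset_rep M \<in> M"
  unfolding coset_rep_def using subgroup.rcosets_non_empty[OF Z assms] by (simp add: some_in_eq)

lemma coset_rep_closed:
  assumes "M \<in> rcosets Z"
  shows "coset_rep M \<in> carrier G"
  using coset_rep_mem[OF assms] assms rcosets_part_G[OF Z] by blast

lemma transfer_factor_mem:
  assumes M: "M \<in> rcosets Z" and g: "g \<in> carrier G"
  shows "coset_rep M \<otimes> g \<otimes> inv coset_rep (M #> g) \<in> Z"
proof -
  have Mg: "M #> g \<in> rcosets Z" using rcosets_mult_closed[OF Z M g] .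
  obtain a where a: "a \<in> carrier G" "M #> g = Z #> a" using Mg by (auto simp: RCOSETS_def)
  have "coset_rep M \<otimes> g \<in> M #> g" using coset_rep_mem[OF M] unfolding r_coset_def by blast
  moreover have "coset_rep (M #> g) \<in> M #> g" using coset_rep_mem[OF Mg] .
  moreover have "coset_rep (M #> g) \<in> carrier G"
    using calculation(2) a subgroup.elemrcos_carrier[OF Z is_group] by auto
  ultimately show ?thesis
    using a subgroup.rcos_module_imp[OF Z is_group] repr_independence[OF _ _ Z] by metis
qed

lemma transfer_closed:
  assumes "g \<in> carrier G"
  shows "transfer G Z g \<in> Z"
proof -
  have "(\<lambda>M. coset_rep M \<otimes> g \<otimes> inv coset_rep (M #> g)) \<in> rcosets Z \<rightarrow> Z"
    using transfer_factor_mem assms by blast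
  thus ?thesis using Z.finprod_closed unfolding transfer_def by simp
qed

lemma transfer_mult:
  assumes g: "g \<in> carrier G" and h: "h \<in> carrier G"
  shows "transfer G Z (g \<otimes> h) = transfer G Z g \<otimes> transfer G Z h"
proof -
  let ?f = "\<lambda>g M. coset_rep M \<otimes> g \<otimes> inv coset_rep (M #> g)"
  have fZ: "?f g \<in> rcosets Z \<rightarrow> Z" "?f h \<in> rcosets Z \<rightarrow> Z" "(\<lambda>M. ?f h (M #> g)) \<in> rcosets Z \<rightarrow> Z"
    using transfer_factor_mem rcosets_mult_closed[OF Z] g h by auto
  have cocycle: "?f (g \<otimes> h) M = ?f g M \<otimes> ?f h (M #> g)" if M: "M \<in> rcosets Z" for M
  proof -
    have "M \<subseteq> carrier G" using M rcosets_part_G[OF Z] by blast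
    hence "M #> g #> h = M #> (g \<otimes> h)" using g h by (simp add: coset_mult_assoc)
    moreover have "coset_rep M \<in> carrier G" "coset_rep (M #> g) \<in> carrier G"
      "coset_rep (M #> (g \<otimes> h)) \<in> carrier G"
      using coset_rep_closed M rcosets_mult_closed[OF Z] g h by auto
    ultimately show ?thesis using g h by (simp add: m_assoc) (simp add: m_assoc[symmetric])
  qed
  have "transfer G Z (g \<otimes> h) = finprod (G\<lparr>carrier := Z\<rparr>) (\<lambda>M. ?f g M \<otimes> ?f h (M #> g)) (rcosets Z)"
  proof -
    have "?f g M \<otimes> ?f h (M #> g) \<in> Z" if M: "M \<in> rcosets Z" for M
      using transfer_factor_mem[OF M g] transfer_factor_mem[OF rcosets_mult_closed[OF Z M g] h]
        subgroup.m_closed[OF Z] by blast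
    thus ?thesis unfolding transfer_def using cocycle by (intro Z.finprod_cong') auto
  qed
  also have "\<dots> = transfer G Z g \<otimes> finprod (G\<lparr>carrier := Z\<rparr>) (\<lambda>M. ?f h (M #> g)) (rcosets Z)"
    using Z.finprod_multf[of "?f g" "rcosets Z" "\<lambda>M. ?f h (M #> g)"] fZ
    unfolding transfer_def by simp
  also have "finprod (G\<lparr>carrier := Z\<rparr>) (\<lambda>M. ?f h (M #> g)) (rcosets Z) = transfer G Z h"
    using Z.finprod_reindex[OF _ bij_betw_imp_inj_on[OF bij_betw_rcosets_mult[OF Z g]], of "?f h"]
      bij_betw_imp_surj_on[OF bij_betw_rcosets_mult[OF Z g]] fZ
    unfolding transfer_def by simp
  finally show ?thesis .
qed

lemma transfer_central:
  assumes z: "z \<in> Z"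
  shows "transfer G Z z = z [^] card (rcosets Z)"
proof -
  have zc: "z \<in> carrier G" using z subgroup.subset[OF Z] by blast
  have comm: "z \<otimes> x = x \<otimes> z" if "x \<in> carrier G" for x
    using that z Z_central by (auto simp: centralizer_def)
  have "coset_rep M \<otimes> z \<otimes> inv coset_rep (M #> z) = z" if M: "M \<in> rcosets Z" for M
  proof -
    obtain a where a: "a \<in> carrier G" "M = Z #> a" using M by (auto simp: RCOSETS_def)
    have "M #> z = Z #> (a \<otimes> z)" using a zc subgroup.subset[OF Z] by (simp add: coset_mult_assoc)
    also have "\<dots> = Z #> z #> a"
      using a zc subgroup.subset[OF Z] by (simp add: coset_mult_assoc comm[OF a(1), symmetric])
    also have "\<dots> = M" using a coset_join2[OF zc Z z] by simp
    finally have "M #> z = M" .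
    moreover have rc: "coset_rep M \<in> carrier G" using coset_rep_closed[OF M] .
    ultimately show ?thesis using zc by (simp add: comm[OF rc, symmetric] m_assoc)
  qed
  hence "transfer G Z z = finprod (G\<lparr>carrier := Z\<rparr>) (\<lambda>M. z) (rcosets Z)"
    unfolding transfer_def using z by (intro Z.finprod_cong') auto
  also have "\<dots> = z [^] card (rcosets Z)"
    using z Z.finprod_const[of z] by (simp add: nat_pow_consistent[symmetric])
  finally show ?thesis .
qed

lemma transfer_hom: "group_hom G (G\<lparr>carrier := Z\<rparr>) (transfer G Z)"
  by (intro group_hom.intro group_hom_axioms.intro is_group Z.is_group homI)
    (simp_all add: transfer_closed transfer_mult)

lemma inj_on_transfer:
  assumes "coprime (card Z) (card (rcosets Z))"
  shows "inj_on (transfer G Z) Z"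
proof -
  interpret V: group_hom G "G\<lparr>carrier := Z\<rparr>" "transfer G Z" using transfer_hom .
  have "z = \<one>" if z: "z \<in> Z" and "transfer G Z z = \<one>" for z
  proof -
    have zc: "z \<in> carrier G" using z subgroup.subset[OF Z] by blast
    have "ord z dvd card Z" "ord z dvd card (rcosets Z)"
      using ord_dvd_card_subgroup[OF Z z] pow_eq_id[OF zc] transfer_central[OF z] that(2) by auto
    hence "ord z = 1" using assms by (meson coprime_common_divisor_nat)
    thus ?thesis using ord_eq_1[OF zc] by simp
  qed
  thus ?thesis
    using V.inj_on_subgroup_iff_trivial_ker[OF Z] subgroup.one_closed[OF Z] by (auto simp: kernel_def)
qed

theorem central_subgroup_normal_complement:
  assumes fin: "finite (carrier G)" and cop: "coprime (card Z) (card (rcosets Z))"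
  shows "\<exists>K. K \<lhd> G \<and> K \<inter> Z = {\<one>} \<and> K <#> Z = carrier G"
proof -
  interpret V: group_hom G "G\<lparr>carrier := Z\<rparr>" "transfer G Z" using transfer_hom .
  define K where "K = kernel G (G\<lparr>carrier := Z\<rparr>) (transfer G Z)"
  have Zc: "Z \<subseteq> carrier G" using subgroup.subset[OF Z] .
  have inj: "inj_on (transfer G Z) Z" using inj_on_transfer[OF cop] .
  have KZ: "K \<inter> Z = {\<one>}"
    using inj_onD[OF inj] subgroup.one_closed[OF Z] V.hom_one by (auto simp: K_def kernel_def)
  have image: "transfer G Z ` Z = Z"
    using endo_inj_surj[OF finite_subset[OF Zc fin] _ inj] transfer_closed Zc by blast
  have "g \<in> K <#> Z" if g: "g \<in> carrier G" for g
  proof -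
    obtain z where z: "z \<in> Z" "transfer G Z z = transfer G Z g"
      using image transfer_closed[OF g] by (metis imageE)
    have zc: "z \<in> carrier G" using z Zc by blast
    have "transfer G Z (g \<otimes> inv z) = \<one>"
      using z g zc transfer_mult transfer_closed V.hom_inv Zc
      by (simp add: m_inv_consistent Z subset_iff)
    hence "g \<otimes> inv z \<in> K" using g zc by (simp add: K_def kernel_def)
    moreover have "g = (g \<otimes> inv z) \<otimes> z" using g zc by (simp add: m_assoc)
    ultimately show ?thesis using z(1) unfolding set_mult_def by blast
  qed
  moreover have "K <#> Z \<subseteq> carrier G"
    using setmult_subset_G Zc by (auto simp: K_def kernel_def)
  ultimately show ?thesis using V.normal_kernel KZ unfolding K_def by blast
qed

end

end

section \<open>Hall subgroups whose centralizer supplements them\<close>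

context group
begin

lemma card_centralizer_if_set_mult_eq_carrier:
  assumes fin: "finite (carrier G)" and R: "subgroup R G"
    and RC: "R <#> centralizer G R = carrier G"
  shows "card (centralizer G R) = card (rcosets R) * card (R \<inter> centralizer G R)"
proof -
  have C: "subgroup (centralizer G R) G" using subgroup_centralizer[OF subgroup.subset[OF R]] .
  have "card (carrier G) * card (R \<inter> centralizer G R) = card R * card (centralizer G R)"
    using card_set_mult_mult_card_Int[OF fin R C] RC by simp
  moreover have "card (carrier G) = card R * card (rcosets R)"
    using lagrange[OF R] by (simp add: order_def mult.commute)
  moreover have "0 < card R"
    using finite_subset[OF subgroup.subset[OF R] fin] subgroup.one_closed[OF R] card_gt_0_iff by blast
  ultimately show ?thesis by (simp add: mult.assoc)
qed

lemma complement_in_centralizer_if_Hall: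
  assumes fin: "finite (carrier G)" and R: "subgroup R G"
    and cop: "coprime (card R) (card (rcosets R))"
    and RC: "R <#> centralizer G R = carrier G"
  shows "\<exists>K. subgroup K G \<and> K \<subseteq> centralizer G R \<and> R \<inter> K = {\<one>} \<and> card K = card (rcosets R)
    \<and> (\<forall>c\<in>centralizer G R. \<forall>k\<in>K. c \<otimes> k \<otimes> inv c \<in> K)"
proof -
  define C where "C = centralizer G R"
  define Z where "Z = R \<inter> C"
  have C: "subgroup C G" unfolding C_def using subgroup_centralizer[OF subgroup.subset[OF R]] .
  have Z: "subgroup Z G" unfolding Z_def using subgroups_Inter_pair[OF R C] .
  have ZR: "Z \<subseteq> R" and ZC: "Z \<subseteq> C" unfolding Z_def by blast+
  have cardC: "card C = card (rcosets R) * card Z"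
    using card_centralizer_if_set_mult_eq_carrier[OF fin R RC] unfolding C_def Z_def .
  have Z_pos: "0 < card Z"
    using finite_subset[OF subgroup.subset[OF Z] fin] subgroup.one_closed[OF Z] card_gt_0_iff by blast
  interpret CG: group "G\<lparr>carrier := C\<rparr>" using subgroup_imp_group[OF C] .
  have ZCG: "subgroup Z (G\<lparr>carrier := C\<rparr>)" using subgroup_incl[OF Z C ZC] .
  have index: "card (rcosets\<^bsub>G\<lparr>carrier := C\<rparr>\<^esub> Z) = card (rcosets R)"
    using CG.lagrange[OF ZCG] cardC Z_pos by (simp add: order_def)
  have "Z \<subseteq> centralizer (G\<lparr>carrier := C\<rparr>) (carrier (G\<lparr>carrier := C\<rparr>))"
    using ZC unfolding Z_def C_def centralizer_def by auto
  moreover have "coprime (card Z) (card (rcosets\<^bsub>G\<lparr>carrier := C\<rparr>\<^esub> Z))"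
    unfolding index by (rule coprime_divisors[OF card_subgroup_dvd[OF Z R ZR] dvd_refl cop])
  moreover have "finite (carrier (G\<lparr>carrier := C\<rparr>))"
    using finite_subset[OF subgroup.subset[OF C] fin] by simp
  ultimately obtain K where KC: "K \<lhd> G\<lparr>carrier := C\<rparr>" and KZ: "K \<inter> Z = {\<one>}" and KZC: "K <#> Z = C"
    using group.central_subgroup_normal_complement[OF CG.is_group ZCG] by auto
  have K: "subgroup K G" using incl_subgroup[OF C normal_imp_subgroup[OF KC]] .
  have "K \<subseteq> C" using subgroup.subset[OF normal_imp_subgroup[OF KC]] by simp
  moreover have "R \<inter> K = {\<one>}"
    using KZ \<open>K \<subseteq> C\<close> subgroup.one_closed[OF R] subgroup.one_closed[OF K] unfolding Z_def by blast
  moreover have "card K = card (rcosets R)"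
    using card_set_mult_mult_card_Int[OF fin K Z] KZ KZC cardC Z_pos by simp
  moreover have "c \<otimes> k \<otimes> inv c \<in> K" if "c \<in> C" "k \<in> K" for c k
    using that CG.normal_invE(2)[OF KC] C by simp
  ultimately show ?thesis using K unfolding C_def by blast
qed

lemma normal_complement_if_Hall_and_set_mult_centralizer:
  assumes fin: "finite (carrier G)" and R: "subgroup R G"
    and cop: "coprime (card R) (card (rcosets R))"
    and RC: "R <#> centralizer G R = carrier G"
  shows "\<exists>K. K \<lhd> G \<and> R \<inter> K = {\<one>} \<and> R <#> K = carrier G"
proof -
  obtain K where K: "subgroup K G" and KC: "K \<subseteq> centralizer G R" and RK: "R \<inter> K = {\<one>}"
    and cardK: "card K = card (rcosets R)"
    and C_normalizes: "\<And>c k. c \<in> centralizer G R \<Longrightarrow> k \<in> K \<Longrightarrow> c \<otimes> k \<otimes> inv c \<in> K"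
    using complement_in_centralizer_if_Hall[OF assms] by blast
  have Rc: "R \<subseteq> carrier G" using subgroup.subset[OF R] .
  have "card (R <#> K) = card (carrier G)"
    using card_set_mult_mult_card_Int[OF fin R K] RK cardK lagrange[OF R]
    by (simp add: order_def mult.commute)
  hence "R <#> K = carrier G"
    using card_seteq[OF fin setmult_subset_G[OF Rc subgroup.subset[OF K]]] by simp
  moreover have "K \<lhd> G"
  proof (rule normal_if_normalized_by_factors[OF K RC Rc])
    show "centralizer G R \<subseteq> carrier G" by (auto simp: centralizer_def)
    show "r \<otimes> k \<otimes> inv r \<in> K" if r: "r \<in> R" and k: "k \<in> K" for r k
    proof -
      have "r \<otimes> k = k \<otimes> r" "r \<in> carrier G" "k \<in> carrier G"
        using r k KC Rc unfolding centralizer_def by auto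
      thus ?thesis using k by (simp add: m_assoc)
    qed
  qed (rule C_normalizes)
  ultimately show ?thesis using RK by blast
qed

end

section \<open>Sylow subgroups centralized by Sylow subgroups\<close>

lemma sylow_subgroup_exists:
  assumes "group G" "finite (carrier G)" "Factorial_Ring.prime r"
  shows "\<exists>P. sylow_subgroup G r P"
proof -
  define a where "a = multiplicity r (order G)"
  have "order G = r ^ a * (order G div r ^ a)" unfolding a_def by (simp add: multiplicity_dvd)
  hence "sylow G r a (order G div r ^ a)" using assms by (simp add: sylow_eq sylow_axioms_def)
  thus ?thesis using sylow.sylow_thm unfolding sylow_subgroup_def a_def by blast
qed

context group
begin

lemma sylow_set_mult_centralizer_eq_carrier:
  assumes fin: "finite (carrier G)" and R: "subgroup R G" and cR: "card R = p ^ multiplicity p (order G)"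
    and parts: "\<And>s. Factorial_Ring.prime s \<Longrightarrow> s dvd order G \<Longrightarrow> s \<noteq> p \<Longrightarrow>
      s ^ multiplicity s (order G) dvd card (centralizer G R)"
  shows "R <#> centralizer G R = carrier G"
proof (rule subgroup_eq_carrier_if_prime_power_parts_dvd[OF fin])
  have Rc: "R \<subseteq> carrier G" using subgroup.subset[OF R] .
  have C: "subgroup (centralizer G R) G" using subgroup_centralizer[OF Rc] .
  show RC: "subgroup (R <#> centralizer G R) G"
    using subgroup_set_mult_centralizing[OF R C] Rc by (auto simp: centralizer_def)
  have "R \<subseteq> R <#> centralizer G R" "centralizer G R \<subseteq> R <#> centralizer G R"
    using subgroup.one_closed[OF R] subgroup.one_closed[OF C] Rc subgroup.subset[OF C]
    unfolding set_mult_def by (force, force)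
  hence "card R dvd card (R <#> centralizer G R)"
    "card (centralizer G R) dvd card (R <#> centralizer G R)"
    using card_subgroup_dvd[OF R RC] card_subgroup_dvd[OF C RC] by auto
  thus "s ^ multiplicity s (order G) dvd card (R <#> centralizer G R)"
    if "Factorial_Ring.prime s" "s dvd order G" for s
    using parts[OF that] cR dvd_trans by (cases "s = p") auto
qed

lemma O_pi_of_sylow_direct_factor:
  assumes fin: "finite (carrier G)" and p: "Factorial_Ring.prime p"
    and R: "R \<lhd> G" "card R = p ^ multiplicity p (order G)" and K: "K \<lhd> G"
    and RK: "R \<inter> K = {\<one>}" "R <#> K = carrier G"
  shows "O_pi G {p} = R" "O_pi G (primes_except p) = K"
proof -
  have Rsub: "subgroup R G" and Ksub: "subgroup K G" using R(1) K normal_imp_subgroup by auto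
  have ndvd: "\<not> p dvd card (rcosets R)" using not_dvd_card_rcosets_sylow[OF fin p Rsub R(2)] .
  have "card K * card R = card (rcosets R) * card R"
    using card_set_mult_mult_card_Int[OF fin Rsub Ksub] RK lagrange[OF Rsub]
    by (simp add: order_def mult.commute) metis
  hence cK: "card K = card (rcosets R)"
    using R(2) p by (simp add: prime_gt_0_nat)
  have "card (rcosets K) * card (rcosets R) = card R * card (rcosets R)"
    using lagrange[OF Ksub] lagrange[OF Rsub] cK by (simp add: mult.commute)
  hence iK: "card (rcosets K) = card R"
    using ndvd by (metis dvd_0_right mult_right_cancel)
  have p_only: "r = p" if "Factorial_Ring.prime r" "r dvd card R" for r
    using that R(2) p prime_dvd_power primes_dvd_imp_eq by metis
  have not_p: "r \<noteq> p" if "r dvd card (rcosets R)" for r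
    using that ndvd by blast
  show "O_pi G {p} = R"
    using O_pi_eq_if_normal_Hall[OF R(1)] p_only not_p Rsub by (auto simp: pi_subgroup_def)
  show "O_pi G (primes_except p) = K"
    using O_pi_eq_if_normal_Hall[OF K] p_only not_p Ksub cK iK
    by (auto simp: pi_subgroup_def primes_except_def)
qed

theorem sylow_direct_factor_if_centralized:
  assumes fin: "finite (carrier G)" and p: "Factorial_Ring.prime p"
    and centralized: "\<And>s. Factorial_Ring.prime s \<Longrightarrow> s dvd order G \<Longrightarrow> s \<noteq> p \<Longrightarrow>
      \<exists>R S. sylow_subgroup G p R \<and> sylow_subgroup G s S \<and> S \<subseteq> centralizer G R"
  shows "O_pi G {p} \<lhd> G \<and> O_pi G (primes_except p) \<lhd> G
    \<and> O_pi G {p} \<inter> O_pi G (primes_except p) = {\<one>} \<and> O_pi G {p} <#> O_pi G (primes_except p) = carrier G"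
proof -
  obtain R where "sylow_subgroup G p R" using sylow_subgroup_exists[OF is_group fin p] by blast
  hence R: "subgroup R G" "card R = p ^ multiplicity p (order G)" unfolding sylow_subgroup_def by auto
  have "s ^ multiplicity s (order G) dvd card (centralizer G R)"
    if "Factorial_Ring.prime s" "s dvd order G" "s \<noteq> p" for s
    using centralized[OF that] card_dvd_card_centralizer_sylow[OF fin p R]
    unfolding sylow_subgroup_def by force
  hence RC: "R <#> centralizer G R = carrier G"
    using sylow_set_mult_centralizer_eq_carrier[OF fin R] by blast
  have "coprime (card R) (card (rcosets R))"
    using not_dvd_card_rcosets_sylow[OF fin p R] R(2) p by (simp add: prime_imp_coprime)
  then obtain K where "K \<lhd> G" "R \<inter> K = {\<one>}" "R <#> K = carrier G"
    using normal_complement_if_Hall_and_set_mult_centralizer[OF fin R(1) _ RC] by blast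
  moreover have "R \<lhd> G" using normal_if_set_mult_centralizer_eq_carrier[OF R(1) RC] .
  ultimately show ?thesis using O_pi_of_sylow_direct_factor[OF fin p _ R(2)] by simp
qed

end

section \<open>Commuting probability of Sylow subgroups\<close>

lemma (in group) card_commuting_pairs:
  assumes "R \<subseteq> carrier G" "S \<subseteq> carrier G" "finite R" "finite S"
  shows "card {(x, y) \<in> R \<times> S. x \<otimes> y = y \<otimes> x} = (\<Sum>x\<in>R. card (S \<inter> centralizer G {x}))"
proof -
  have "{(x, y) \<in> R \<times> S. x \<otimes> y = y \<otimes> x} = Sigma R (\<lambda>x. S \<inter> centralizer G {x})"
    using assms(1,2) unfolding centralizer_def by auto
  thus ?thesis using assms(3,4) by simp
qed

lemma commuting_count_bound:
  fixes p q r a t u :: real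
  assumes qu: "q * u \<le> (r - a) * t" and pa: "p * a \<le> r" and pos: "0 \<le> p" "1 \<le> q" "0 \<le> t"
  shows "p * q * (a * t + u) \<le> (p + q - 1) * (r * t)"
proof -
  have "p * q * (a * t + u) = p * q * a * t + p * (q * u)" by (simp add: algebra_simps)
  also have "\<dots> \<le> p * q * a * t + p * ((r - a) * t)"
    using qu pos by (intro add_left_mono mult_left_mono) auto
  also have "\<dots> = (q - 1) * (p * a) * t + p * r * t" by (simp add: algebra_simps)
  also have "\<dots> \<le> (q - 1) * r * t + p * r * t"
    using pa pos by (intro add_right_mono mult_right_mono mult_left_mono) auto
  also have "\<dots> = (p + q - 1) * (r * t)" by (simp add: algebra_simps)
  finally show ?thesis .
qed

(* Count the commuting pairs row by row: the rows indexed by A = C_R(S) are full and there are at most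
   |R|/p of them; every other row meets S in a proper subgroup, so in at most |S|/s \<le> |S|/q elements. *)
lemma (in group) card_commuting_pairs_bound:
  assumes fin: "finite (carrier G)" and R: "subgroup R G" and S: "subgroup S G"
    and p: "Factorial_Ring.prime p" and cR: "card R = p ^ a"
    and s: "Factorial_Ring.prime s" and cS: "card S = s ^ b"
    and q: "0 < q" "q \<le> s" and not_centralizing: "\<not> S \<subseteq> centralizer G R"
  shows "real (p * q * card {(x, y) \<in> R \<times> S. x \<otimes> y = y \<otimes> x}) \<le> real (p + q - 1) * (card R * card S)"
proof -
  have Rc: "R \<subseteq> carrier G" and Sc: "S \<subseteq> carrier G" using R S subgroup.subset by auto
  have finR: "finite R" and finS: "finite S" using fin Rc Sc finite_subset by auto
  define A where "A = R \<inter> centralizer G S"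
  define C where "C x = S \<inter> centralizer G {x}" for x
  obtain x0 y0 where "x0 \<in> R" "y0 \<in> S" "y0 \<otimes> x0 \<noteq> x0 \<otimes> y0"
    using not_centralizing Sc by (auto simp: centralizer_def)
  hence AR: "A \<subset> R" unfolding A_def centralizer_def by force
  have pA: "p * card A \<le> card R"
    using card_proper_subgroup_prime_power[OF _ R AR p cR]
      subgroups_Inter_pair[OF R subgroup_centralizer[OF Sc]] unfolding A_def by blast
  have qC: "q * card (C x) \<le> card S" if x: "x \<in> R - A" for x
  proof -
    have "C x \<subset> S" using x Rc unfolding A_def C_def centralizer_def by force
    moreover have "subgroup (C x) G"
      unfolding C_def using x Rc by (intro subgroups_Inter_pair S subgroup_centralizer) auto
    ultimately have "s * card (C x) \<le> card S"
      using card_proper_subgroup_prime_power[OF _ S _ s cS] by blast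
    thus ?thesis using q(2) by (meson le_trans mult_le_mono1)
  qed
  have "card {(x, y) \<in> R \<times> S. x \<otimes> y = y \<otimes> x} = (\<Sum>x\<in>R. card (C x))"
    using card_commuting_pairs[OF Rc Sc finR finS] unfolding C_def .
  also have "\<dots> = (\<Sum>x\<in>A. card (C x)) + (\<Sum>x\<in>R - A. card (C x))"
    using finR AR by (metis sum.subset_diff add.commute psubset_imp_subset)
  also have "(\<Sum>x\<in>A. card (C x)) = card A * card S"
  proof -
    have "C x = S" if "x \<in> A" for x using that Sc unfolding A_def C_def centralizer_def by auto
    thus ?thesis by simp
  qed
  finally have N: "card {(x, y) \<in> R \<times> S. x \<otimes> y = y \<otimes> x} = card A * card S + (\<Sum>x\<in>R - A. card (C x))" .
  have "q * (\<Sum>x\<in>R - A. card (C x)) \<le> (\<Sum>x\<in>R - A. card S)"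
    unfolding sum_distrib_left using qC by (intro sum_mono) auto
  also have "\<dots> = (card R - card A) * card S"
    using card_Diff_subset[OF finite_subset[OF _ finR], of A] AR by auto
  finally have "real q * real (\<Sum>x\<in>R - A. card (C x)) \<le> (real (card R) - card A) * card S"
    using psubset_card_mono[OF finR AR] by (metis less_imp_le of_nat_diff of_nat_le_iff of_nat_mult)
  hence "real p * real q * (real (card A) * real (card S) + real (\<Sum>x\<in>R - A. card (C x)))
      \<le> (real p + real q - 1) * (real (card R) * real (card S))"
    using of_nat_mono[OF pA, where 'a=real] q(1) by (intro commuting_count_bound) auto
  thus ?thesis unfolding N using q(1) by (simp add: of_nat_diff)
qed

lemma (in group) commute_if_comm_prob_gt:
  assumes fin: "finite (carrier G)" and R: "subgroup R G" and S: "subgroup S G"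
    and p: "Factorial_Ring.prime p" and cR: "card R = p ^ a"
    and s: "Factorial_Ring.prime s" and cS: "card S = s ^ b"
    and q: "0 < q" "q \<le> s"
    and gt: "comm_prob G R S > real (p + q - 1) / real (p * q)"
  shows "S \<subseteq> centralizer G R"
proof (rule ccontr)
  assume "\<not> S \<subseteq> centralizer G R"
  from card_commuting_pairs_bound[OF assms(1-9) this]
  have "real (p * q * card {(x, y) \<in> R \<times> S. x \<otimes> y = y \<otimes> x}) \<le> real (p + q - 1) * (card R * card S)" .
  moreover have "0 < card R" "0 < card S"
    using finite_subset[OF subgroup.subset[OF R] fin] finite_subset[OF subgroup.subset[OF S] fin]
      subgroup.one_closed[OF R] subgroup.one_closed[OF S] card_gt_0_iff by blast+
  ultimately have "comm_prob G R S \<le> real (p + q - 1) / real (p * q)"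
    using prime_gt_0_nat[OF p] q(1) unfolding comm_prob_def by (simp add: divide_simps mult.commute)
  thus False using gt by simp
qed

definition max_comm_prob_sylow :: "('a, 'b) monoid_scheme \<Rightarrow> nat \<Rightarrow> nat \<Rightarrow> real" where
  "max_comm_prob_sylow G r s =
     Max {comm_prob G R S | R S. sylow_subgroup G r R \<and> sylow_subgroup G s S}"

lemma comm_probs_sylow_subset:
  "{comm_prob G R S | R S. sylow_subgroup G r R \<and> sylow_subgroup G s S}
     \<subseteq> (\<lambda>(R, S). comm_prob G R S) ` (Pow (carrier G) \<times> Pow (carrier G))"
proof
  fix v assume "v \<in> {comm_prob G R S | R S. sylow_subgroup G r R \<and> sylow_subgroup G s S}"
  then obtain R S where "v = comm_prob G R S" "R \<subseteq> carrier G" "S \<subseteq> carrier G"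
    unfolding sylow_subgroup_def using subgroup.subset by blast
  thus "v \<in> (\<lambda>(R, S). comm_prob G R S) ` (Pow (carrier G) \<times> Pow (carrier G))"
    using image_eqI[of v "\<lambda>(R, S). comm_prob G R S" "(R, S)"] by auto
qed

lemma finite_comm_probs_sylow:
  assumes "finite (carrier G)"
  shows "finite {comm_prob G R S | R S. sylow_subgroup G r R \<and> sylow_subgroup G s S}"
  using finite_subset[OF comm_probs_sylow_subset] assms by blast

lemma comm_prob_le_max_comm_prob_sylow:
  assumes "finite (carrier G)" "sylow_subgroup G r R" "sylow_subgroup G s S"
  shows "comm_prob G R S \<le> max_comm_prob_sylow G r s"
  unfolding max_comm_prob_sylow_def using assms finite_comm_probs_sylow by (intro Max_ge) auto

lemma max_comm_prob_sylow_mem: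
  assumes "group G" "finite (carrier G)" "Factorial_Ring.prime r" "Factorial_Ring.prime s"
  shows "max_comm_prob_sylow G r s
    \<in> {comm_prob G R S | R S. sylow_subgroup G r R \<and> sylow_subgroup G s S}"
proof -
  obtain R S where "sylow_subgroup G r R" "sylow_subgroup G s S"
    using sylow_subgroup_exists[OF assms(1-3)] sylow_subgroup_exists[OF assms(1,2,4)] by blast
  thus ?thesis
    unfolding max_comm_prob_sylow_def using finite_comm_probs_sylow[OF assms(2)] by (intro Max_in) auto
qed

(* pr_star is a GREATEST over the reals, so one has to show that the maximum exists: it is the least of
   the finitely many values max_comm_prob_sylow G r s. *)
lemma pr_star_attained:
  assumes G: "group G" and fin: "finite (carrier G)"
    and rs: "r \<in> \<pi>1" "s \<in> \<pi>2" "Factorial_Ring.prime r" "Factorial_Ring.prime s" "r \<noteq> s"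
  shows "\<exists>R S. sylow_subgroup G r R \<and> sylow_subgroup G s S \<and> pr_star G \<pi>1 \<pi>2 \<le> comm_prob G R S"
proof -
  define T where
    "T = {(r, s). r \<in> \<pi>1 \<and> s \<in> \<pi>2 \<and> Factorial_Ring.prime r \<and> Factorial_Ring.prime s \<and> r \<noteq> s}"
  define m where "m = Min ((\<lambda>(r, s). max_comm_prob_sylow G r s) ` T)"
  let ?ok = "\<lambda>\<epsilon>. \<forall>r s. r \<in> \<pi>1 \<and> s \<in> \<pi>2 \<and> Factorial_Ring.prime r \<and> Factorial_Ring.prime s \<and> r \<noteq> s \<longrightarrow>
       (\<exists>R S. sylow_subgroup G r R \<and> sylow_subgroup G s S \<and> comm_prob G R S \<ge> \<epsilon>)"
  have "(\<lambda>(r, s). max_comm_prob_sylow G r s) ` T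
      \<subseteq> (\<lambda>(R, S). comm_prob G R S) ` (Pow (carrier G) \<times> Pow (carrier G))"
  proof
    fix v assume "v \<in> (\<lambda>(r, s). max_comm_prob_sylow G r s) ` T"
    then obtain r' s' where "v = max_comm_prob_sylow G r' s'"
      and "Factorial_Ring.prime r'" "Factorial_Ring.prime s'" unfolding T_def by auto
    thus "v \<in> (\<lambda>(R, S). comm_prob G R S) ` (Pow (carrier G) \<times> Pow (carrier G))"
      using subsetD[OF comm_probs_sylow_subset max_comm_prob_sylow_mem[OF G fin]] by simp
  qed
  hence finT: "finite ((\<lambda>(r, s). max_comm_prob_sylow G r s) ` T)"
    using finite_subset fin by blast
  have rsT: "(r, s) \<in> T" unfolding T_def using rs by simp
  have "?ok m"
  proof (intro allI impI)
    fix r' s' assume "r' \<in> \<pi>1 \<and> s' \<in> \<pi>2 \<and> Factorial_Ring.prime r' \<and> Factorial_Ring.prime s' \<and> r' \<noteq> s'"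
    hence "(r', s') \<in> T" and primes: "Factorial_Ring.prime r'" "Factorial_Ring.prime s'"
      unfolding T_def by simp_all
    hence "m \<le> max_comm_prob_sylow G r' s'" unfolding m_def using finT by (auto intro: Min_le)
    moreover obtain R S where "sylow_subgroup G r' R" "sylow_subgroup G s' S"
      "max_comm_prob_sylow G r' s' = comm_prob G R S"
      using max_comm_prob_sylow_mem[OF G fin primes] by blast
    ultimately show "\<exists>R S. sylow_subgroup G r' R \<and> sylow_subgroup G s' S \<and> m \<le> comm_prob G R S"
      by (metis (no_types))
  qed
  moreover have "\<epsilon> \<le> m" if ok: "?ok \<epsilon>" for \<epsilon>
  proof -
    have "m \<in> (\<lambda>(r, s). max_comm_prob_sylow G r s) ` T"
      unfolding m_def using finT rsT by (intro Min_in) auto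
    then obtain r' s' where "(r', s') \<in> T" "m = max_comm_prob_sylow G r' s'" by auto
    moreover obtain R S where RS: "sylow_subgroup G r' R" "sylow_subgroup G s' S" "\<epsilon> \<le> comm_prob G R S"
      using ok \<open>(r', s') \<in> T\<close> unfolding T_def by blast
    ultimately show ?thesis using comm_prob_le_max_comm_prob_sylow[OF fin RS(1,2)] by linarith
  qed
  ultimately have "pr_star G \<pi>1 \<pi>2 = m" unfolding pr_star_def by (intro Greatest_equality) auto
  with \<open>?ok m\<close> show ?thesis using rs by auto
qed

theorem proposition3p2:
  fixes G :: "('a, 'b) monoid_scheme" and p q :: nat
  assumes "group G" and "finite (carrier G)"
    and "Factorial_Ring.prime p" and "p dvd order G"
    and "q \<in> prime_divs G - {p}"
    and "\<forall>r \<in> prime_divs G - {p}. q \<le> r"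
    and "pr_star G {p} (primes_except p) > real (p + q - 1) / real (p * q)"
  shows "O_pi G {p} \<lhd> G \<and> O_pi G (primes_except p) \<lhd> G
     \<and> O_pi G {p} \<inter> O_pi G (primes_except p) = {monoid.one G}
     \<and> set_mult G (O_pi G {p}) (O_pi G (primes_except p)) = carrier G"
proof (rule group.sylow_direct_factor_if_centralized[OF assms(1-3)])
  fix s assume s: "Factorial_Ring.prime s" "s dvd order G" "s \<noteq> p"
  have "0 < q" "q \<le> s" using assms(5,6) s by (auto simp: prime_divs_def prime_gt_0_nat)
  obtain R S where R: "sylow_subgroup G p R" and S: "sylow_subgroup G s S"
    and "comm_prob G R S > real (p + q - 1) / real (p * q)"
    using pr_star_attained[OF assms(1,2), of p "{p}" s "primes_except p"] assms(3,7) s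
    by (force simp: primes_except_def)
  hence "S \<subseteq> centralizer G R"
    using group.commute_if_comm_prob_gt[OF assms(1,2) _ _ assms(3) _ s(1) _ \<open>0 < q\<close> \<open>q \<le> s\<close>]
    unfolding sylow_subgroup_def by blast
  thus "\<exists>R S. sylow_subgroup G p R \<and> sylow_subgroup G s S \<and> S \<subseteq> centralizer G R"
    using R S by blast
qed

end
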